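(* Let $Q\in\mathbb{R}^{n\times n}$ be symmetric positive definite, $g\in\mathbb{R}^n$, $\sigma\in(0,1/2]$, $tol\ge 0$. There exist constants $\delta_2>0$ and $\bar K\in\mathbb{N}$ (depending only on $Q,g,\sigma,tol,n$) such that, for any iteration of the generic random active set method and conditional on the history up to that iteration, the probability that the method stops within the subsequent $\bar K$ iterations is at least $\delta_2$.
   Context: Consider the problem $\min_{x\in\mathbb{R}^n}\tfrac12 x^TQx+g^Tx$ subject to $x\ge 0$. For index sets $A,B\subseteq\{1,\dots,n\}$, $x_A$ denotes the subvector of $x$ indexed by $A$ and $Q_{A,B}$ the submatrix with rows in $A$ and columns in $B$. For a finite index set $S$ and a vector $p=(p_j)_{j\in S}$ of probabilities, $\mathrm{rand}(S,p)$ denotes a random subset of $S$ containing each $j\in S$ independently with probability $p_j$. Generic random active set method (RAS): Step 0: given $\sigma\in(0,1/2]$, an initial active set $A$, $I=\{1,\dots,n\}\setminus A$, and $tol\ge 0$. Step 1: compute $x_I=-Q_{I,I}^{-1}g_I$ and $s_A=Q_{A,I}x_I+g_A$; set $Im=\{i\in I: x_i\le 0\}$, $Am=\{j\in A: s_j<-tol\}$, $Ip=I\setminus Im$, $Ap=A\setminus Am$. Step 2: if $Im\cup Am=\emptyset$, stop. Otherwise choose (possibly depending on the whole history) vectors $p_{Im}\in\mathbb{R}^{|Im|}$, $p_{Am}\in\mathbb{R}^{|Am|}$ with every entry in $[\sigma,1-\sigma]$, and let $Imc=\mathrm{rand}(Im,p_{Im})$, $Imf=Im\setminus Imc$, $Amc=\mathrm{rand}(Am,p_{Am})$,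 $Amf=Am\setminus Amc$ (fresh independent randomness at each iteration). Step 3: set $I\leftarrow Ip\cup Imf\cup Amc$, $A\leftarrow Ap\cup Amf\cup Imc$, and return to Step 1. *)

theory Defs
  imports "HOL-Analysis.Analysis" "HOL-Probability.Probability"
begin

text \<open>Problem data: Q :: real^'n^'n, g :: real^'n, index type 'n finite (n = CARD('n)).
  Active set A :: 'n set, inactive set I = UNIV - A.\<close>

definition sym_pos_def :: "real^'n^'n \<Rightarrow> bool" where
  "sym_pos_def Q \<longleftrightarrow> transpose Q = Q \<and> (\<forall>x. x \<noteq> 0 \<longrightarrow> x \<bullet> (Q *v x) > 0)"

text \<open>Q_{I,I} embedded as a block with the identity on the complement of I.\<close>
definition sub_block :: "real^'n^'n \<Rightarrow> 'n set \<Rightarrow> real^'n^'n" where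
  "sub_block Q I = (\<chi> i j. if i \<in> I \<and> j \<in> I then Q $ i $ j else if i = j then 1 else 0)"

definition restr :: "real^'n \<Rightarrow> 'n set \<Rightarrow> real^'n" where
  "restr v I = (\<chi> i. if i \<in> I then v $ i else 0)"

text \<open>x with x_I = - Q_{I,I}^{-1} g_I and x_A = 0.\<close>
definition ras_x :: "real^'n^'n \<Rightarrow> real^'n \<Rightarrow> 'n set \<Rightarrow> real^'n" where
  "ras_x Q g A = restr (- (matrix_inv (sub_block Q (UNIV - A)) *v restr g (UNIV - A))) (UNIV - A)"

text \<open>s_A = Q_{A,I} x_I + g_A (evaluated for j in A).\<close>
definition ras_s :: "real^'n^'n \<Rightarrow> real^'n \<Rightarrow> 'n set \<Rightarrow> real^'n" where
  "ras_s Q g A = Q *v ras_x Q g A + g"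

definition ras_Im :: "real^'n^'n \<Rightarrow> real^'n \<Rightarrow> 'n set \<Rightarrow> 'n set" where
  "ras_Im Q g A = {i. i \<notin> A \<and> ras_x Q g A $ i \<le> 0}"

definition ras_Am :: "real^'n^'n \<Rightarrow> real^'n \<Rightarrow> real \<Rightarrow> 'n set \<Rightarrow> 'n set" where
  "ras_Am Q g tol A = {j. j \<in> A \<and> ras_s Q g A $ j < - tol}"

definition ras_stops :: "real^'n^'n \<Rightarrow> real^'n \<Rightarrow> real \<Rightarrow> 'n set \<Rightarrow> bool" where
  "ras_stops Q g tol A \<longleftrightarrow> ras_Im Q g A \<union> ras_Am Q g tol A = {}"

text \<open>One iteration (Steps 2-3): S is the random set of indices of Im \<union> Am selected by rand
  (each j independently with probability p j); Imc = Im \<inter> S, Amc = Am \<inter> S.\<close>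
definition ras_next :: "real^'n^'n \<Rightarrow> real^'n \<Rightarrow> real \<Rightarrow> ('n \<Rightarrow> real) \<Rightarrow> 'n set \<Rightarrow> 'n set pmf" where
  "ras_next Q g tol p A =
     (let Im = ras_Im Q g A; Am = ras_Am Q g tol A
      in map_pmf (\<lambda>f. (A - Am) \<union> (Am - {j. f j}) \<union> (Im \<inter> {j. f j}))
           (Pi_pmf (Im \<union> Am) False (\<lambda>j. bernoulli_pmf (p j))))"

text \<open>Probability that the method, currently at active set A with past history h
  (list of previous active sets), stops within the next k iterations, when the
  probability vectors are chosen by the (history-dependent) strategy strat.\<close>
fun ras_stop_prob :: "real^'n^'n \<Rightarrow> real^'n \<Rightarrow> real \<Rightarrow> ('n set list \<Rightarrow> 'n \<Rightarrow> real)
    \<Rightarrow> nat \<Rightarrow> 'n set list \<Rightarrow> 'n set \<Rightarrow> real" where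
  "ras_stop_prob Q g tol strat 0 h A = (if ras_stops Q g tol A then 1 else 0)"
| "ras_stop_prob Q g tol strat (Suc k) h A =
     (if ras_stops Q g tol A then 1
      else measure_pmf.expectation (ras_next Q g tol (strat (h @ [A])) A)
             (\<lambda>A'. ras_stop_prob Q g tol strat k (h @ [A]) A'))"

end

theory Submission
  imports Defs
begin

text \<open>From every active set there is a chain of at most
  K = (2^n + 1)(n + 2) + n moves, each an outcome of one iteration of the method, that ends at a
  set where the method stops. Every entry of the probability vectors lies in [\<sigma>, 1 - \<sigma>], so each
  move is taken with probability at least \<sigma>^n, and the method stops within K iterations with
  probability at least \<sigma>^(nK).

  The chain is built from two kinds of moves. A ratio-test step goes from a nonnegative point of
  the current coordinate subspace towards the subproblem minimiser until a violated coordinate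
  reaches zero and makes that coordinate active; after at most n such steps the subproblem
  solution is feasible and no worse than the starting point. From a feasible active set at which
  the method does not stop, releasing an index with negative multiplier and then restoring
  feasibility reaches a feasible active set with strictly smaller objective value; since there
  are only 2^n active sets, this happens at most 2^n times.\<close>

definition quad_obj :: "real^'n^'n \<Rightarrow> real^'n \<Rightarrow> real^'n \<Rightarrow> real" where
  "quad_obj Q g x = (1/2) * (x \<bullet> (Q *v x)) + g \<bullet> x"

definition coord_subspace :: "'n set \<Rightarrow> (real^'n) set" where
  "coord_subspace A = {x. \<forall>i\<in>A. x $ i = 0}"

lemma inner_matrix_vector_symmetric:
  fixes Q :: "real^'n^'n"
  assumes "transpose Q = Q"
  shows "u \<bullet> (Q *v v) = v \<bullet> (Q *v u)"
  by (metis assms dot_lmul_matrix inner_commute transpose_matrix_vector)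

lemma quad_obj_add:
  fixes Q :: "real^'n^'n"
  assumes "transpose Q = Q"
  shows "quad_obj Q g (x + d) = quad_obj Q g x + d \<bullet> (Q *v x + g) + (1/2) * (d \<bullet> (Q *v d))"
  using inner_matrix_vector_symmetric[OF assms, of x d]
  by (simp add: quad_obj_def matrix_vector_right_distrib inner_add_left inner_add_right
      algebra_simps inner_commute)

lemma sym_pos_def_symmetric: "sym_pos_def Q \<Longrightarrow> transpose Q = Q"
  by (simp add: sym_pos_def_def)

lemma sym_pos_def_inner_pos: "sym_pos_def Q \<Longrightarrow> d \<noteq> 0 \<Longrightarrow> 0 < d \<bullet> (Q *v d)"
  by (simp add: sym_pos_def_def)

lemma sym_pos_def_inner_nonneg: "sym_pos_def Q \<Longrightarrow> 0 \<le> d \<bullet> (Q *v d)"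
  by (cases "d = 0") (auto dest: sym_pos_def_inner_pos)

lemma sub_block_mult:
  "(sub_block Q I *v x) $ i = (if i \<in> I then (Q *v restr x I) $ i else x $ i)"
proof (cases "i \<in> I")
  case True
  then show ?thesis
    by (auto simp: matrix_vector_mult_def sub_block_def restr_def intro!: sum.cong)
next
  case False
  then have "(sub_block Q I *v x) $ i = (\<Sum>j\<in>UNIV. if j = i then x $ j else 0)"
    unfolding matrix_vector_mult_def vec_lambda_beta
    by (intro sum.cong) (use False in \<open>auto simp: sub_block_def\<close>)
  with False show ?thesis by simp
qed

lemma sub_block_invertible:
  assumes "sym_pos_def Q"
  shows "invertible (sub_block Q I)"
proof -
  have "x = 0" if Mx: "sub_block Q I *v x = 0" for x
  proof -
    have off: "x $ i = 0" if "i \<notin> I" for i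
      using arg_cong[OF Mx, of "\<lambda>v. v $ i"] that by (simp add: sub_block_mult)
    then have "restr x I = x" by (auto simp: restr_def vec_eq_iff)
    then have on: "(Q *v x) $ i = 0" if "i \<in> I" for i
      using arg_cong[OF Mx, of "\<lambda>v. v $ i"] that by (simp add: sub_block_mult)
    from off on have "x $ i * (Q *v x) $ i = 0" for i
      by (cases "i \<in> I") auto
    then have "x \<bullet> (Q *v x) = 0"
      unfolding inner_vec_def by (simp add: sum.neutral)
    then show "x = 0" using sym_pos_def_inner_pos[OF assms] by force
  qed
  then show ?thesis
    unfolding invertible_left_inverse matrix_left_invertible_ker by blast
qed

lemma ras_x_in_coord_subspace: "ras_x Q g A \<in> coord_subspace A"
  by (simp add: ras_x_def coord_subspace_def restr_def)

lemma ras_s_inactive: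
  assumes Q: "sym_pos_def Q" and "i \<notin> A"
  shows "ras_s Q g A $ i = 0"
proof -
  let ?I = "UNIV - A"
  let ?M = "sub_block Q ?I"
  define z where "z = matrix_inv ?M *v restr g ?I"
  have "?M ** matrix_inv ?M = mat 1"
    using sub_block_invertible[OF Q] unfolding invertible_def matrix_inv_def
    by (rule someI_ex[where P = "\<lambda>B. ?M ** B = mat 1 \<and> B ** ?M = mat 1", THEN conjunct1])
  then have "?M *v z = restr g ?I"
    by (simp add: z_def matrix_vector_mul_assoc)
  then have "(?M *v z) $ i = restr g ?I $ i"
    by simp
  then have "(Q *v restr z ?I) $ i = g $ i"
    using assms(2) by (simp add: sub_block_mult restr_def)
  moreover have "ras_x Q g A = - restr z ?I"
    by (simp add: ras_x_def z_def restr_def vec_eq_iff)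
  ultimately show ?thesis
    by (simp add: ras_s_def matrix_vector_mult_def sum_negf)
qed

lemma inner_ras_s_coord_subspace:
  assumes Q: "sym_pos_def Q" and d: "d \<in> coord_subspace A"
  shows "d \<bullet> ras_s Q g A = 0"
proof -
  have "d $ i * ras_s Q g A $ i = 0" for i
    using ras_s_inactive[OF Q, of i A g] d by (cases "i \<in> A") (auto simp: coord_subspace_def)
  then show ?thesis
    unfolding inner_vec_def by (simp add: sum.neutral)
qed

lemma quad_obj_coord_subspace:
  assumes Q: "sym_pos_def Q" and y: "y \<in> coord_subspace A"
  shows "quad_obj Q g y = quad_obj Q g (ras_x Q g A)
           + (1/2) * ((y - ras_x Q g A) \<bullet> (Q *v (y - ras_x Q g A)))"
proof -
  have "y - ras_x Q g A \<in> coord_subspace A"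
    using y ras_x_in_coord_subspace[of Q g A] by (simp add: coord_subspace_def)
  then show ?thesis
    using quad_obj_add[OF sym_pos_def_symmetric[OF Q], of g "ras_x Q g A" "y - ras_x Q g A"]
      inner_ras_s_coord_subspace[OF Q] by (simp add: ras_s_def)
qed

lemma quad_obj_ras_x_le:
  "sym_pos_def Q \<Longrightarrow> y \<in> coord_subspace A \<Longrightarrow> quad_obj Q g (ras_x Q g A) \<le> quad_obj Q g y"
  using quad_obj_coord_subspace sym_pos_def_inner_nonneg by fastforce

lemma inner_descent_direction:
  fixes g :: "real^'n"
  assumes Q: "sym_pos_def Q" and y: "y \<in> coord_subspace A"
  defines "d \<equiv> ras_x Q g A - y"
  shows "d \<bullet> (Q *v y + g) = - (d \<bullet> (Q *v d))"
proof -
  have "(y - ras_x Q g A) \<bullet> (Q *v (y - ras_x Q g A)) = d \<bullet> (Q *v d)"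
    by (simp add: d_def matrix_vector_mult_diff_distrib inner_diff_left inner_diff_right algebra_simps)
  then show ?thesis
    using quad_obj_add[OF sym_pos_def_symmetric[OF Q], of g y d] quad_obj_coord_subspace[OF Q y, of g]
    by (simp add: d_def)
qed

lemma quad_obj_segment:
  fixes g :: "real^'n"
  assumes Q: "sym_pos_def Q" and y: "y \<in> coord_subspace A"
  defines "d \<equiv> ras_x Q g A - y"
  shows "quad_obj Q g (y + t *\<^sub>R d) = quad_obj Q g y - (t - t^2/2) * (d \<bullet> (Q *v d))"
proof -
  have "quad_obj Q g (y + t *\<^sub>R d)
      = quad_obj Q g y + t * (d \<bullet> (Q *v y + g)) + (1/2) * (t^2 * (d \<bullet> (Q *v d)))"
    using quad_obj_add[OF sym_pos_def_symmetric[OF Q], of g y "t *\<^sub>R d"]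
    by (simp add: matrix_vector_mult_scaleR power2_eq_square)
  moreover have "d \<bullet> (Q *v y + g) = - (d \<bullet> (Q *v d))"
    unfolding d_def by (rule inner_descent_direction[OF Q y])
  ultimately show ?thesis
    by (simp only:) (simp add: algebra_simps power2_eq_square)
qed

lemma ras_x_release:
  assumes Q: "sym_pos_def Q" and j: "j \<in> A" and sj: "ras_s Q g A $ j < 0"
  shows "0 < ras_x Q g (A - {j}) $ j"
    and "quad_obj Q g (ras_x Q g (A - {j})) < quad_obj Q g (ras_x Q g A)"
proof -
  define x where "x = ras_x Q g A"
  define d where "d = ras_x Q g (A - {j}) - x"
  have xA: "x \<in> coord_subspace A" and xAj: "x \<in> coord_subspace (A - {j})"
    using ras_x_in_coord_subspace[of Q g A] by (auto simp: x_def coord_subspace_def)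
  have "d $ i * ras_s Q g A $ i = 0" if "i \<noteq> j" for i
    using that xA ras_x_in_coord_subspace[of Q g "A - {j}"] ras_s_inactive[OF Q, of i A g]
    by (cases "i \<in> A") (auto simp: d_def coord_subspace_def)
  then have "(\<Sum>i\<in>UNIV - {j}. d $ i * ras_s Q g A $ i) = 0"
    by (intro sum.neutral) blast
  then have "d \<bullet> ras_s Q g A = d $ j * ras_s Q g A $ j"
    unfolding inner_vec_def by (simp add: sum.remove[of _ j])
  moreover have "d \<bullet> ras_s Q g A = - (d \<bullet> (Q *v d))"
    using inner_descent_direction[OF Q xAj, of g] by (simp add: d_def x_def ras_s_def)
  moreover have "d \<noteq> 0"
    using sj ras_s_inactive[OF Q, of j "A - {j}" g] by (auto simp: d_def x_def ras_s_def)
  ultimately have "d $ j * ras_s Q g A $ j < 0"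
    using sym_pos_def_inner_pos[OF Q] by fastforce
  then have "0 < d $ j"
    using sj by (simp add: mult_less_0_iff)
  then show "0 < ras_x Q g (A - {j}) $ j"
    using xA j by (simp add: d_def coord_subspace_def)
  have "x - ras_x Q g (A - {j}) \<noteq> 0"
    using \<open>d \<noteq> 0\<close> by (simp add: d_def)
  then show "quad_obj Q g (ras_x Q g (A - {j})) < quad_obj Q g (ras_x Q g A)"
    using quad_obj_coord_subspace[OF Q xAj, of g] sym_pos_def_inner_pos[OF Q] by (simp add: x_def)
qed

text \<open>The point y' is the last nonnegative point on the segment from y to the subproblem
  minimiser, and i is a coordinate that blocks the segment there.\<close>
lemma ratio_test_step:
  assumes Q: "sym_pos_def Q" and y: "y \<in> coord_subspace B" and y_nonneg: "\<forall>k. 0 \<le> y $ k"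
    and viol: "ras_Im Q g B \<noteq> {}"
  obtains i y' where "i \<in> ras_Im Q g B" and "y' \<in> coord_subspace (insert i B)"
    and "\<forall>k. 0 \<le> y' $ k" and "quad_obj Q g y' \<le> quad_obj Q g y"
    and "ras_x Q g B \<noteq> y \<Longrightarrow> \<forall>k\<in>ras_Im Q g B. 0 < y $ k \<Longrightarrow> quad_obj Q g y' < quad_obj Q g y"
proof -
  define x where "x = ras_x Q g B"
  define N where "N = ras_Im Q g B"
  have N: "k \<in> N \<longleftrightarrow> k \<notin> B \<and> x $ k \<le> 0" for k
    by (simp add: N_def ras_Im_def x_def)
  have xB: "x \<in> coord_subspace B"
    unfolding x_def by (rule ras_x_in_coord_subspace)
  \<comment> \<open>On N we have x_k \<le> 0 \<le> y_k; if y_k = x_k both vanish and r k = 0 because x / 0 = 0.\<close>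
  define r where "r k = y $ k / (y $ k - x $ k)" for k
  define t where "t = Min (r ` N)"
  have "t \<in> r ` N"
    unfolding t_def using viol by (intro Min_in) (auto simp: N_def)
  then obtain i where iN: "i \<in> N" and ti: "t = r i"
    by blast
  have t_le: "t \<le> r k" if "k \<in> N" for k
    using that by (simp add: t_def)
  have "0 \<le> r k \<and> r k \<le> 1" if "k \<in> N" for k
    using that y_nonneg[rule_format, of k] by (auto simp: N r_def divide_le_eq_1)
  then have t0: "0 \<le> t" and t1: "t \<le> 1"
    using iN ti by auto
  define y' where "y' = y + t *\<^sub>R (x - y)"
  have y'_comp: "y' $ k = y $ k - t * (y $ k - x $ k)" for k
    by (simp add: y'_def algebra_simps)
  show ?thesis
  proof
    show "i \<in> ras_Im Q g B"
      using iN by (simp add: N_def)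
    have "y' $ i = 0"
      using iN y_nonneg[rule_format, of i] by (cases "y $ i = x $ i") (auto simp: N y'_comp ti r_def)
    with xB y show "y' \<in> coord_subspace (insert i B)"
      by (simp add: coord_subspace_def y'_comp)
    show "\<forall>k. 0 \<le> y' $ k"
    proof
      fix k
      show "0 \<le> y' $ k"
      proof (cases "k \<in> N")
        case True
        then have "t * (y $ k - x $ k) \<le> y $ k"
          using t_le[of k] y_nonneg[rule_format, of k]
          by (cases "y $ k = x $ k") (auto simp: N r_def le_divide_eq)
        then show ?thesis by (simp add: y'_comp)
      next
        case False
        then have "0 \<le> x $ k"
          using xB by (auto simp: N coord_subspace_def)
        then have "0 \<le> (1 - t) * y $ k + t * x $ k"
          using t0 t1 y_nonneg by simp
        then show ?thesis by (simp add: y'_comp algebra_simps)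
      qed
    qed
    have "0 \<le> t - t^2/2"
      using mult_left_le[OF t1 t0] t0 by (simp add: power2_eq_square)
    then show "quad_obj Q g y' \<le> quad_obj Q g y"
      using quad_obj_segment[OF Q y, of g t] sym_pos_def_inner_nonneg[OF Q, of "x - y"]
      by (simp add: y'_def x_def)
    assume "ras_x Q g B \<noteq> y" and pos: "\<forall>k\<in>ras_Im Q g B. 0 < y $ k"
    then have "0 < (x - y) \<bullet> (Q *v (x - y))"
      by (simp add: x_def sym_pos_def_inner_pos[OF Q])
    moreover have "0 < y $ i"
      using pos iN by (simp add: N_def)
    with iN have "0 < t"
      by (simp add: N ti r_def)
    then have "0 < t - t^2/2"
      using t1 by (simp add: power2_eq_square)
    ultimately show "quad_obj Q g y' < quad_obj Q g y"
      using quad_obj_segment[OF Q y, of g t] by (simp add: y'_def x_def)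
  qed
qed

text \<open>The outcomes of one iteration from A that have positive probability under ras_next.\<close>
definition ras_move :: "real^'n^'n \<Rightarrow> real^'n \<Rightarrow> real \<Rightarrow> 'n set \<Rightarrow> 'n set \<Rightarrow> bool" where
  "ras_move Q g tol A A' \<longleftrightarrow> (\<exists>S \<subseteq> ras_Im Q g A \<union> ras_Am Q g tol A.
      A' = (A - ras_Am Q g tol A) \<union> (ras_Am Q g tol A - S) \<union> (ras_Im Q g A \<inter> S))"

fun stop_reachable :: "real^'n^'n \<Rightarrow> real^'n \<Rightarrow> real \<Rightarrow> nat \<Rightarrow> 'n set \<Rightarrow> bool" where
  "stop_reachable Q g tol 0 A \<longleftrightarrow> ras_stops Q g tol A"
| "stop_reachable Q g tol (Suc k) A \<longleftrightarrow>
     ras_stops Q g tol A \<or> (\<exists>A'. ras_move Q g tol A A' \<and> stop_reachable Q g tol k A')"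

lemma stop_reachable_if_stops: "ras_stops Q g tol A \<Longrightarrow> stop_reachable Q g tol k A"
  by (cases k) auto

lemma stop_reachable_mono:
  "stop_reachable Q g tol k A \<Longrightarrow> k \<le> k' \<Longrightarrow> stop_reachable Q g tol k' A"
proof (induction k arbitrary: k' A)
  case 0
  then show ?case by (simp add: stop_reachable_if_stops)
next
  case (Suc k)
  then obtain k'' where "k' = Suc k''" and "k \<le> k''"
    by (cases k') auto
  with Suc show ?case by auto
qed

lemma ras_move_insert: "i \<in> ras_Im Q g B \<Longrightarrow> ras_move Q g tol B (insert i B)"
  unfolding ras_move_def by (rule exI[of _ "{i}"]) (auto simp: ras_Im_def ras_Am_def)

lemma ras_move_remove: "j \<in> ras_Am Q g tol A \<Longrightarrow> ras_move Q g tol A (A - {j})"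
  unfolding ras_move_def by (rule exI[of _ "{j}"]) (auto simp: ras_Im_def ras_Am_def)

lemma card_Compl_insert:
  fixes X :: "'a::finite set"
  assumes "i \<notin> X"
  shows "Suc (card (UNIV - insert i X)) = card (UNIV - X)"
proof -
  have "Suc (card ((UNIV - X) - {i})) = card (UNIV - X)"
    by (rule card_Suc_Diff1) (use assms in auto)
  moreover have "UNIV - insert i X = (UNIV - X) - {i}" by auto
  ultimately show ?thesis by simp
qed

lemma stop_reachable_by_restoration:
  assumes Q: "sym_pos_def Q" and y: "y \<in> coord_subspace B" and y_nonneg: "\<forall>k. 0 \<le> y $ k"
    and cont: "\<And>B'. ras_Im Q g B' = {} \<Longrightarrow> quad_obj Q g (ras_x Q g B') \<le> quad_obj Q g y
                  \<Longrightarrow> stop_reachable Q g tol M B'"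
  shows "stop_reachable Q g tol (M + card (UNIV - B)) B"
  using y y_nonneg cont
proof (induction "card (UNIV - B)" arbitrary: B y rule: less_induct)
  case less
  show ?case
  proof (cases "ras_Im Q g B = {}")
    case True
    then have "stop_reachable Q g tol M B"
      using less.prems quad_obj_ras_x_le[OF Q] by blast
    then show ?thesis
      by (rule stop_reachable_mono) simp
  next
    case False
    obtain i y' where i: "i \<in> ras_Im Q g B" and y': "y' \<in> coord_subspace (insert i B)"
      "\<forall>k. 0 \<le> y' $ k" "quad_obj Q g y' \<le> quad_obj Q g y"
      using ratio_test_step[OF Q less.prems(1,2) False] by blast
    have "i \<notin> B"
      using i by (simp add: ras_Im_def)
    then have card: "Suc (card (UNIV - insert i B)) = card (UNIV - B)"
      by (rule card_Compl_insert)
    have "stop_reachable Q g tol M B'"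
      if "ras_Im Q g B' = {}" "quad_obj Q g (ras_x Q g B') \<le> quad_obj Q g y'" for B'
      using that y'(3) by (intro less.prems(3)) auto
    then have "stop_reachable Q g tol (M + card (UNIV - insert i B)) (insert i B)"
      using card by (intro less.hyps[OF _ y'(1,2)]) auto
    then show ?thesis
      using ras_move_insert[OF i, of tol] card by (metis add_Suc_right stop_reachable.simps(2))
  qed
qed

definition better_feasible :: "real^'n^'n \<Rightarrow> real^'n \<Rightarrow> 'n set \<Rightarrow> 'n set set" where
  "better_feasible Q g A =
     {B. ras_Im Q g B = {} \<and> quad_obj Q g (ras_x Q g B) < quad_obj Q g (ras_x Q g A)}"

lemma card_better_feasible_less:
  assumes "B \<in> better_feasible Q g A"
  shows "card (better_feasible Q g B) < card (better_feasible Q g A)"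
  by (rule psubset_card_mono) (use assms in \<open>auto simp: better_feasible_def\<close>)

lemma stop_reachable_after_release:
  fixes Q :: "real^'n^'n"
  assumes Q: "sym_pos_def Q" and feas: "ras_Im Q g A = {}" and j: "j \<in> A" "ras_s Q g A $ j < 0"
    and cont: "\<And>B. B \<in> better_feasible Q g A \<Longrightarrow> stop_reachable Q g tol M B"
  shows "stop_reachable Q g tol (M + CARD('n)) (A - {j})"
proof (cases "ras_Im Q g (A - {j}) = {}")
  case True
  then have "stop_reachable Q g tol M (A - {j})"
    using cont ras_x_release(2)[OF Q j] by (simp add: better_feasible_def)
  then show ?thesis
    by (rule stop_reachable_mono) simp
next
  case False
  define y where "y = ras_x Q g A"
  have y: "y \<in> coord_subspace (A - {j})"
    using ras_x_in_coord_subspace[of Q g A] by (auto simp: y_def coord_subspace_def)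
  have y_pos: "0 < y $ k" if "k \<notin> A" for k
    using feas that by (auto simp: ras_Im_def y_def)
  moreover have "y $ k = 0" if "k \<in> A" for k
    using that ras_x_in_coord_subspace[of Q g A] by (simp add: y_def coord_subspace_def)
  ultimately have y_nonneg: "\<forall>k. 0 \<le> y $ k"
    by (metis less_eq_real_def)
  have "ras_x Q g (A - {j}) \<noteq> y"
    using ras_x_release(1)[OF Q j] j(1) ras_x_in_coord_subspace[of Q g A]
    by (auto simp: y_def coord_subspace_def)
  moreover have "\<forall>k\<in>ras_Im Q g (A - {j}). 0 < y $ k"
    using ras_x_release(1)[OF Q j] y_pos by (auto simp: ras_Im_def)
  ultimately obtain i y' where i: "i \<in> ras_Im Q g (A - {j})"
    and y': "y' \<in> coord_subspace (insert i (A - {j}))" "\<forall>k. 0 \<le> y' $ k"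
    and better: "quad_obj Q g y' < quad_obj Q g y"
    using ratio_test_step[OF Q y y_nonneg False] by blast
  have "stop_reachable Q g tol M B"
    if "ras_Im Q g B = {}" "quad_obj Q g (ras_x Q g B) \<le> quad_obj Q g y'" for B
    using that better by (intro cont) (simp add: better_feasible_def y_def)
  then have "stop_reachable Q g tol (M + card (UNIV - insert i (A - {j}))) (insert i (A - {j}))"
    by (rule stop_reachable_by_restoration[OF Q y'])
  then have reach: "stop_reachable Q g tol (Suc (M + card (UNIV - insert i (A - {j})))) (A - {j})"
    using ras_move_insert[OF i, of tol] by auto
  have "i \<notin> A - {j}"
    using i by (simp add: ras_Im_def)
  then have "Suc (card (UNIV - insert i (A - {j}))) = card (UNIV - (A - {j}))"
    by (rule card_Compl_insert)
  also have "\<dots> \<le> CARD('n)"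
    by (rule card_mono) auto
  finally show ?thesis
    using stop_reachable_mono[OF reach] by simp
qed

lemma stop_reachable_from_feasible:
  fixes Q :: "real^'n^'n"
  assumes Q: "sym_pos_def Q" and tol: "0 \<le> tol" and feas: "ras_Im Q g A = {}"
  shows "stop_reachable Q g tol ((card (better_feasible Q g A) + 1) * (CARD('n) + 2)) A"
  using feas
proof (induction "card (better_feasible Q g A)" arbitrary: A rule: less_induct)
  case less
  let ?M = "card (better_feasible Q g A) * (CARD('n) + 2)"
  show ?case
  proof (cases "ras_stops Q g tol A")
    case True
    then show ?thesis by (rule stop_reachable_if_stops)
  next
    case False
    then obtain j where j: "j \<in> ras_Am Q g tol A"
      using less.prems by (auto simp: ras_stops_def)
    then have "j \<in> A" "ras_s Q g A $ j < 0"
      using tol by (auto simp: ras_Am_def)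
    moreover have "stop_reachable Q g tol ?M B" if B: "B \<in> better_feasible Q g A" for B
    proof -
      have less_card: "card (better_feasible Q g B) < card (better_feasible Q g A)"
        using B by (rule card_better_feasible_less)
      moreover have "ras_Im Q g B = {}"
        using B by (simp add: better_feasible_def)
      ultimately have "stop_reachable Q g tol ((card (better_feasible Q g B) + 1) * (CARD('n) + 2)) B"
        by (rule less.hyps)
      then show ?thesis
        by (rule stop_reachable_mono) (use less_card in \<open>intro mult_le_mono1; simp\<close>)
    qed
    ultimately have "stop_reachable Q g tol (?M + CARD('n)) (A - {j})"
      by (rule stop_reachable_after_release[OF Q less.prems])
    then have "stop_reachable Q g tol (Suc (?M + CARD('n))) A"
      using ras_move_remove[OF j] by auto
    then show ?thesis
      by (rule stop_reachable_mono) simp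
  qed
qed

lemma stop_reachable_uniform:
  fixes Q :: "real^'n^'n"
  assumes Q: "sym_pos_def Q" and tol: "0 \<le> tol"
  shows "stop_reachable Q g tol ((2 ^ CARD('n) + 1) * (CARD('n) + 2) + CARD('n)) A"
proof -
  let ?M = "(2 ^ CARD('n) + 1) * (CARD('n) + 2)"
  have "stop_reachable Q g tol ?M B" if "ras_Im Q g B = {}" for B
  proof -
    have "card (better_feasible Q g B) \<le> card (UNIV :: 'n set set)"
      by (rule card_mono) auto
    also have "\<dots> = 2 ^ CARD('n)"
      by (metis Pow_UNIV card_Pow finite)
    finally have "(card (better_feasible Q g B) + 1) * (CARD('n) + 2) \<le> ?M"
      by (intro mult_le_mono1) simp
    with stop_reachable_from_feasible[OF Q tol that] show ?thesis
      by (rule stop_reachable_mono)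
  qed
  then have "stop_reachable Q g tol (?M + card (UNIV - A)) A"
    by (intro stop_reachable_by_restoration[OF Q, of 0]) (auto simp: coord_subspace_def)
  then show ?thesis
    by (rule stop_reachable_mono) (simp add: card_mono)
qed

lemma ras_stop_prob_nonneg: "0 \<le> ras_stop_prob Q g tol strat k h A"
  by (induction k arbitrary: h A) (auto intro!: integral_nonneg)

lemma pmf_mult_le_expectation:
  fixes M :: "'a::finite pmf"
  assumes "\<And>x. 0 \<le> f x"
  shows "pmf M a * f a \<le> measure_pmf.expectation M f"
proof -
  have "f a * pmf M a \<le> (\<Sum>x\<in>UNIV. f x * pmf M x)"
    by (rule member_le_sum) (use assms in auto)
  also have "\<dots> = measure_pmf.expectation M f"
    by (rule integral_measure_pmf_real[symmetric]) auto
  finally show ?thesis by (simp add: mult.commute)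
qed

lemma pmf_ras_next_ge:
  fixes Q :: "real^'n^'n"
  assumes p: "\<forall>j. \<sigma> \<le> p j \<and> p j \<le> 1 - \<sigma>" and \<sigma>: "0 < \<sigma>" and move: "ras_move Q g tol A A'"
  shows "\<sigma> ^ CARD('n) \<le> pmf (ras_next Q g tol p A) A'"
proof -
  let ?J = "ras_Im Q g A \<union> ras_Am Q g tol A"
  let ?F = "\<lambda>f. (A - ras_Am Q g tol A) \<union> (ras_Am Q g tol A - {j. f j}) \<union> (ras_Im Q g A \<inter> {j. f j})"
  let ?P = "Pi_pmf ?J False (\<lambda>j. bernoulli_pmf (p j))"
  obtain S where S: "S \<subseteq> ?J" and A': "A' = ?F (\<lambda>j. j \<in> S)"
    using move unfolding ras_move_def by auto
  have \<sigma>1: "\<sigma> \<le> 1"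
    using p[rule_format, of undefined] \<sigma> by linarith
  have coin: "\<sigma> \<le> pmf (bernoulli_pmf (p j)) b" for j b
    using p[rule_format, of j] \<sigma> by (cases b) auto
  have "\<sigma> ^ CARD('n) \<le> \<sigma> ^ card ?J"
    by (rule power_decreasing) (use \<sigma> \<sigma>1 in \<open>auto simp: card_mono\<close>)
  also have "\<dots> = (\<Prod>j\<in>?J. \<sigma>)"
    by simp
  also have "\<dots> \<le> (\<Prod>j\<in>?J. pmf (bernoulli_pmf (p j)) (j \<in> S))"
    by (rule prod_mono) (use coin \<sigma> in \<open>auto simp: less_imp_le\<close>)
  also have "\<dots> = pmf ?P (\<lambda>j. j \<in> S)"
    by (rule pmf_Pi'[symmetric]) (use S in auto)
  also have "\<dots> \<le> measure_pmf.prob ?P (?F -` {A'})"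
    unfolding measure_pmf_single[symmetric] by (rule measure_pmf.finite_measure_mono) (auto simp: A')
  also have "\<dots> = pmf (ras_next Q g tol p A) A'"
    by (simp add: ras_next_def Let_def pmf_map)
  finally show ?thesis .
qed

lemma ras_stop_prob_ge:
  fixes Q :: "real^'n^'n"
  assumes p: "\<forall>hs j. \<sigma> \<le> strat hs j \<and> strat hs j \<le> 1 - \<sigma>" and \<sigma>: "0 < \<sigma>"
  shows "stop_reachable Q g tol k A \<Longrightarrow> \<sigma> ^ (CARD('n) * k) \<le> ras_stop_prob Q g tol strat k h A"
proof (induction k arbitrary: h A)
  case 0
  then show ?case by simp
next
  case (Suc k)
  have \<sigma>1: "\<sigma> \<le> 1"
    using p[rule_format, of "[]" undefined] \<sigma> by linarith
  show ?case
  proof (cases "ras_stops Q g tol A")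
    case True
    then show ?thesis
      using \<sigma> \<sigma>1 by (simp add: power_le_one)
  next
    case False
    then obtain A' where move: "ras_move Q g tol A A'" and reach: "stop_reachable Q g tol k A'"
      using Suc.prems by auto
    let ?P = "ras_next Q g tol (strat (h @ [A])) A"
    have "\<sigma> ^ (CARD('n) * Suc k) = \<sigma> ^ CARD('n) * \<sigma> ^ (CARD('n) * k)"
      by (simp add: power_add)
    also have "\<dots> \<le> pmf ?P A' * ras_stop_prob Q g tol strat k (h @ [A]) A'"
      using pmf_ras_next_ge[OF _ \<sigma> move, of "strat (h @ [A])"] p Suc.IH[OF reach] \<sigma>
      by (intro mult_mono) auto
    also have "\<dots> \<le> measure_pmf.expectation ?P (\<lambda>A'. ras_stop_prob Q g tol strat k (h @ [A]) A')"
      by (rule pmf_mult_le_expectation) (rule ras_stop_prob_nonneg)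
    finally show ?thesis
      using False by simp
  qed
qed

theorem lemma2p2:
  fixes Q :: "real^'n^'n" and g :: "real^'n" and \<sigma> tol :: real
  assumes "sym_pos_def Q" and "0 < \<sigma>" and "\<sigma> \<le> 1/2" and "tol \<ge> 0"
  shows "\<exists>\<delta>2 > 0. \<exists>Kbar :: nat.
           \<forall>strat :: 'n set list \<Rightarrow> 'n \<Rightarrow> real. \<forall>h A.
             (\<forall>hs j. \<sigma> \<le> strat hs j \<and> strat hs j \<le> 1 - \<sigma>) \<longrightarrow>
             ras_stop_prob Q g tol strat Kbar h A \<ge> \<delta>2"
proof -
  define K where "K = (2 ^ CARD('n) + 1) * (CARD('n) + 2) + CARD('n)"
  have "stop_reachable Q g tol K A" for A
    unfolding K_def by (rule stop_reachable_uniform[OF assms(1,4)])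
  then have "\<sigma> ^ (CARD('n) * K) \<le> ras_stop_prob Q g tol strat K h A"
    if "\<forall>hs j. \<sigma> \<le> strat hs j \<and> strat hs j \<le> 1 - \<sigma>" for strat h A
    by (rule ras_stop_prob_ge[OF that assms(2)])
  moreover have "0 < \<sigma> ^ (CARD('n) * K)"
    using assms(2) by simp
  ultimately show ?thesis
    by blast
qed

end
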